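(* The map $f$ defined below restricts to a bijection from $\mathcal{G}_1$ onto $\mathcal{A}_1$, and $f(\pi)$ is a partition of the same integer as $\pi$.
   Context: Partitions are nonincreasing finite sequences of positive integers; $m_j(\pi)$ is the multiplicity of $j$ in $\pi$, $\ell(\pi)$ the number of parts, and $\pi\cup\lambda$ the partition formed by all parts of both (as a multiset). $\langle a^{m}\rangle$ denotes the partition consisting of $m$ copies of $a$. $\mathcal{G}_2$ is the set of partitions $\pi$ with $m_1(\pi)\le 1$ and $m_j(\pi)+m_{j+1}(\pi)\le 2$ for all $j\ge1$. $\mathcal{G}_1$ is the set of partitions $\pi$ with $m_1(\pi)=0$ and $m_j(\pi)+m_{j+1}(\pi)\le 2$ for all $j\ge1$ (so $\mathcal G_1\subset\mathcal G_2$). For $\pi\in\mathcal{G}_2$ every part has multiplicity at most $2$. Let $D(\pi)$ be the number of distinct parts of multiplicity $2$, let $R_1(\pi)>R_2(\pi)>\dots>R_{D(\pi)}(\pi)$ be these parts, and set $R_{D(\pi)+1}(\pi)=0$, $R_0(\pi)=\infty$. For $0\le k\le D(\pi)$ let $\pi^{(k)}$ be the partition consisting of the parts of $\pi$ strictly between $R_{k+1}(\pi)$ and $R_k(\pi)$ (these parts are distinct). For a partition $\mu$ and integer $c$, $\mu+\langle c^{\ell(\mu)}\rangle$ denotes $\mu$ with $c$ added to each part. Define $$f(\pi)=\bigcup_{i=1}^{D(\pi)}\big\langle (2i)^{R_i(\pi)-R_{i+1}(\pi)-\ell(\pi^{(i)})}\big\rangle\ \cup\ \bigcup_{i=0}^{D(\pi)}\Big(\pi^{(i)}+\langle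 (2i)^{\ell(\pi^{(i)})}\rangle\Big).$$ For a partition $\lambda$, $R_1(\lambda)$ is its largest part of multiplicity $\ge2$ (or $0$ if none). $\mathcal{A}_1$ is the set of partitions $\lambda$ such that $m_j(\lambda)\le1$ for odd $j$, $m_j(\lambda)=0$ for odd $j<R_1(\lambda)+2$, and $m_j(\lambda)\ge 2$ for even $j$ with $0<j<R_1(\lambda)$. *)

theory Defs
  imports Main "HOL-Library.Multiset"
begin

text \<open>Partitions are represented as finite multisets of positive naturals.
  The multiplicity m_j(pi) is count pi j, the number of parts is size pi,
  the union of partitions is multiset sum (+), the integer partitioned is
  sum_mset pi, and the partition with m copies of a is replicate_mset m a.\<close>

definition is_partition :: "nat multiset \<Rightarrow> bool" where
  "is_partition p \<longleftrightarrow> 0 \<notin># p"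

definition G2 :: "nat multiset set" where
  "G2 = {p. is_partition p \<and> count p 1 \<le> 1 \<and>
              (\<forall>j\<ge>1. count p j + count p (j+1) \<le> 2)}"

definition G1 :: "nat multiset set" where
  "G1 = {p. is_partition p \<and> count p 1 = 0 \<and>
              (\<forall>j\<ge>1. count p j + count p (j+1) \<le> 2)}"

definition doubled :: "nat multiset \<Rightarrow> nat set" where
  "doubled p = {j. j \<in># p \<and> count p j = 2}"

definition D :: "nat multiset \<Rightarrow> nat" where
  "D p = card (doubled p)"

text \<open>R p i for 1 \<le> i \<le> D p is the i-th largest part of multiplicity 2;
  R p (D p + 1) = 0 (and R p i = 0 for all i > D p).
  The convention R_0 = infinity is handled in block below.\<close>
definition R :: "nat multiset \<Rightarrow> nat \<Rightarrow> nat" where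
  "R p i = (if 1 \<le> i \<and> i \<le> D p
            then rev (sorted_list_of_set (doubled p)) ! (i - 1) else 0)"

definition block :: "nat multiset \<Rightarrow> nat \<Rightarrow> nat multiset" where
  "block p k = filter_mset (\<lambda>x. R p (k+1) < x \<and> (k = 0 \<or> x < R p k)) p"

definition f :: "nat multiset \<Rightarrow> nat multiset" where
  "f p = (\<Sum>i\<in>{1..D p}. replicate_mset (R p i - R p (i+1) - size (block p i)) (2*i))
       + (\<Sum>i\<in>{0..D p}. image_mset (\<lambda>x. x + 2*i) (block p i))"

definition R1 :: "nat multiset \<Rightarrow> nat" where
  "R1 l = (if {j. count l j \<ge> 2} = {} then 0 else Max {j. count l j \<ge> 2})"

definition A1 :: "nat multiset set" where
  "A1 = {l. is_partition l \<and>
            (\<forall>j. odd j \<longrightarrow> count l j \<le> 1) \<and>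
            (\<forall>j. odd j \<and> j < R1 l + 2 \<longrightarrow> count l j = 0) \<and>
            (\<forall>j. even j \<and> 0 < j \<and> j < R1 l \<longrightarrow> count l j \<ge> 2)}"

end

theory Submission
  imports Defs
begin

text \<open>For \<open>\<pi> \<in> G1\<close> with a repeated part let \<open>t = R\<^sub>1(\<pi>)\<close> be the largest one and \<open>\<sigma>\<close> the
  partition of the parts of \<open>\<pi>\<close> below \<open>t\<close>. Unfolding the definition gives
  \<open>f(\<pi>) = (parts of \<pi> above t) \<union> \<langle>2\<^bsup>t - \<ell>(f \<sigma>)\<^esup>\<rangle> \<union> (f(\<sigma>) + 2)\<close> with \<open>\<ell>(f \<sigma>) \<le> t - 2\<close>,
  while \<open>\<pi> \<mapsto> \<sigma>\<close> lowers \<open>D\<close> by one and \<open>f(\<pi>) = \<pi>\<close> when \<open>D(\<pi>) = 0\<close>. By induction on \<open>D\<close>,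
  \<open>f(\<pi>) \<in> A1\<close> with \<open>R\<^sub>1(f \<pi>) = 2 D(\<pi>)\<close>, and \<open>f\<close> preserves the sum. The decomposition can be
  read back from \<open>\<lambda> = f(\<pi>)\<close>: exactly \<open>t\<close> parts of \<open>\<lambda>\<close> are at most \<open>t\<close>, and fewer than \<open>s\<close>
  are at most \<open>s\<close> for every \<open>s > t\<close>; this gives injectivity. Conversely, for \<open>\<lambda> \<in> A1\<close> with
  \<open>R\<^sub>1(\<lambda>) > 0\<close> the largest \<open>t \<ge> R\<^sub>1(\<lambda>)\<close> with at least \<open>t\<close> parts \<open>\<le> t\<close> yields such a
  decomposition of \<open>\<lambda>\<close>, and surjectivity follows by induction on the number of parts.\<close>

abbreviation parts_below :: "nat \<Rightarrow> nat multiset \<Rightarrow> nat multiset" where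
  "parts_below t p \<equiv> filter_mset (\<lambda>x. x < t) p"

abbreviation parts_above :: "nat \<Rightarrow> nat multiset \<Rightarrow> nat multiset" where
  "parts_above t p \<equiv> filter_mset (\<lambda>x. t < x) p"

lemma sorted_list_of_set_Max_snoc:
  assumes "finite S" "S \<noteq> {}"
  shows "sorted_list_of_set S = sorted_list_of_set (S - {Max S}) @ [Max S]"
  by (rule sorted_distinct_set_unique) (use assms in \<open>auto simp: sorted_append intro: Max_in\<close>)

lemma count_image_mset_add:
  "count (image_mset (\<lambda>x. x + k) M) (j::nat) = (if k \<le> j then count M (j - k) else 0)"
proof (induct M)
  case (add x M) then show ?case by (cases "x + k = j") auto
qed simp

lemma size_mset_le_card_if_simple:
  assumes "\<And>x. count M x \<le> 1" "set_mset M \<subseteq> A" "finite A"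
  shows "size M \<le> card A"
proof -
  have "M = mset_set (set_mset M)"
    by (rule multiset_eqI) (use assms(1) in \<open>auto simp: count_mset_set' not_in_iff intro: le_antisym\<close>)
  then have "size M = card (set_mset M)" by (metis size_mset_set)
  also have "\<dots> \<le> card A" using assms(2,3) by (rule card_mono[rotated])
  finally show ?thesis .
qed

lemma size_filter_le_Suc:
  "size (filter_mset (\<lambda>x. x \<le> Suc s) l) = size (filter_mset (\<lambda>x. x \<le> s) l) + count l (Suc s)"
proof -
  have "filter_mset (\<lambda>x. x \<le> Suc s) l = filter_mset (\<lambda>x. x \<le> s) l + replicate_mset (count l (Suc s)) (Suc s)"
    by (rule multiset_eqI) (auto simp: le_Suc_eq)
  then show ?thesis by simp
qed

lemma image_mset_sum: "image_mset g (\<Sum>i\<in>A. F i) = (\<Sum>i\<in>A. image_mset g (F i))"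
  using sum_comp_morphism[of "image_mset g" F A] by (simp add: o_def)

lemma mem_if_count_ge_2: "count l x \<ge> 2 \<Longrightarrow> x \<in># l"
  by (metis count_eq_zero_iff not_numeral_le_zero)

definition stack :: "nat multiset \<Rightarrow> nat \<Rightarrow> nat multiset \<Rightarrow> nat multiset" where
  "stack B m \<mu> = B + replicate_mset m 2 + image_mset (\<lambda>x. x + 2) \<mu>"

definition separated_at :: "nat \<Rightarrow> nat multiset \<Rightarrow> nat multiset \<Rightarrow> bool" where
  "separated_at t B \<mu> \<longleftrightarrow> (\<forall>y\<in>#\<mu>. y + 2 \<le> t) \<and> (\<forall>x\<in>#B. t + 2 \<le> x) \<and> (\<forall>x. count B x \<le> 1)"

lemma count_stack:
  "count (stack B m \<mu>) j = count B j + (if j = 2 then m else 0) + (if 2 \<le> j then count \<mu> (j - 2) else 0)"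
  unfolding stack_def count_union count_image_mset_add by simp

lemma size_stack: "size (stack B m \<mu>) = size B + m + size \<mu>"
  by (simp add: stack_def)

lemma sum_mset_stack: "sum_mset (stack B m \<mu>) = sum_mset B + 2 * m + sum_mset \<mu> + 2 * size \<mu>"
proof -
  have "sum_mset (image_mset (\<lambda>x. x + 2) \<mu>) = sum_mset \<mu> + 2 * size \<mu>" for \<mu> :: "nat multiset"
    by (induct \<mu>) auto
  then show ?thesis by (simp add: stack_def)
qed

lemma separated_atD:
  assumes "separated_at t B \<mu>"
  shows "j < t + 2 \<Longrightarrow> count B j = 0" "t < j + 2 \<Longrightarrow> count \<mu> j = 0" "count B j \<le> 1"
  using assms unfolding separated_at_def by (auto simp: not_in_iff[symmetric])

lemma filter_le_stack:
  assumes "separated_at t B \<mu>" "2 \<le> t" "t \<le> s"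
  shows "filter_mset (\<lambda>x. x \<le> s) (stack B m \<mu>) = stack {#} m \<mu> + filter_mset (\<lambda>x. x \<le> s) B"
  by (rule multiset_eqI) (use separated_atD[OF assms(1)] assms(2,3) in \<open>auto simp: count_stack\<close>)

lemma stack_parts:
  assumes sep: "separated_at t B \<mu>" and t: "2 \<le> t" and size: "m + size \<mu> = t"
  shows "filter_mset (\<lambda>x. x \<le> t) (stack B m \<mu>) = stack {#} m \<mu>"
    and "parts_above t (stack B m \<mu>) = B"
    and "t < s \<Longrightarrow> size (filter_mset (\<lambda>x. x \<le> s) (stack B m \<mu>)) < s"
proof -
  note sep' = separated_atD[OF sep]
  note split = filter_le_stack[OF sep t]
  from split[of t] show "filter_mset (\<lambda>x. x \<le> t) (stack B m \<mu>) = stack {#} m \<mu>"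
    using sep'(1) by (auto simp: not_in_iff[symmetric])
  show "parts_above t (stack B m \<mu>) = B"
    by (rule multiset_eqI) (use sep'(1,2) t in \<open>auto simp: count_stack\<close>)
  assume "t < s"
  have "set_mset (filter_mset (\<lambda>x. x \<le> s) B) \<subseteq> {t+2..s}"
    using sep by (auto simp: separated_at_def)
  then have "size (filter_mset (\<lambda>x. x \<le> s) B) \<le> card {t+2..s}"
    using sep'(3) by (intro size_mset_le_card_if_simple) (auto intro: le_trans)
  moreover have "size (filter_mset (\<lambda>x. x \<le> s) (stack B m \<mu>)) = t + size (filter_mset (\<lambda>x. x \<le> s) B)"
    unfolding split[of s, OF less_imp_le[OF \<open>t < s\<close>]] using size by (simp add: size_stack)
  ultimately show "size (filter_mset (\<lambda>x. x \<le> s) (stack B m \<mu>)) < s"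
    using \<open>t < s\<close> by simp
qed

text \<open>Without \<open>0 \<notin># \<mu>\<close>, a part \<open>0\<close> of \<open>\<mu>\<close> could trade places with a copy of \<open>2\<close>.\<close>

lemma stack_inj:
  assumes "separated_at t B \<mu>" "2 \<le> t" "m + size \<mu> = t" "0 \<notin># \<mu>"
    and "separated_at t' B' \<mu>'" "2 \<le> t'" "m' + size \<mu>' = t'" "0 \<notin># \<mu>'"
    and eq: "stack B m \<mu> = stack B' m' \<mu>'"
  shows "t = t'" "B = B'" "\<mu> = \<mu>'"
proof -
  note parts = stack_parts[OF assms(1-3)] and parts' = stack_parts[OF assms(5-7)]
  have "size (filter_mset (\<lambda>x. x \<le> t) (stack B m \<mu>)) = t"
    using parts(1) assms(3) by (simp add: size_stack)
  moreover have "size (filter_mset (\<lambda>x. x \<le> t') (stack B' m' \<mu>')) = t'"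
    using parts'(1) assms(7) by (simp add: size_stack)
  ultimately show t: "t = t'"
    using parts(3)[of t'] parts'(3)[of t] eq by (cases t t' rule: linorder_cases) auto
  show "B = B'" using parts(2) parts'(2) eq t by simp
  have lower: "stack {#} m \<mu> = stack {#} m' \<mu>'"
    using parts(1) parts'(1) eq t by simp
  have "count \<mu> j = count \<mu>' j" if "j > 0" for j
    using arg_cong[OF lower, of "\<lambda>M. count M (j + 2)"] that by (simp add: count_stack)
  with assms(4,8) show "\<mu> = \<mu>'"
    by (intro multiset_eqI) (metis bot_nat_0.not_eq_extremum count_eq_zero_iff)
qed

lemma G1D:
  assumes "p \<in> G1"
  shows "count p 0 = 0" "count p 1 = 0" "count p j \<le> 2"
    "j \<ge> 1 \<Longrightarrow> count p j + count p (j+1) \<le> 2"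
proof -
  have adj: "\<And>j. j \<ge> 1 \<Longrightarrow> count p j + count p (j+1) \<le> 2" and "0 \<notin># p" "count p 1 = 0"
    using assms unfolding G1_def is_partition_def by auto
  then show "count p 0 = 0" "count p 1 = 0" "j \<ge> 1 \<Longrightarrow> count p j + count p (j+1) \<le> 2"
    by (auto simp: not_in_iff)
  show "count p j \<le> 2"
    using adj[of j] \<open>count p 0 = 0\<close> by (cases "j = 0") auto
qed


lemma doubled_eq: "doubled p = {j. count p j = 2}"
  unfolding doubled_def by (auto intro: count_greater_zero_iff[THEN iffD1])

lemma finite_doubled: "finite (doubled p)"
  unfolding doubled_def by (rule finite_subset[of _ "set_mset p"]) auto

lemma D_eq_0_iff: "D p = 0 \<longleftrightarrow> doubled p = {}"
  using finite_doubled by (simp add: D_def)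

lemma R_in_doubled:
  assumes "1 \<le> i" "i \<le> D p"
  shows "R p i \<in> doubled p"
proof -
  have "R p i = rev (sorted_list_of_set (doubled p)) ! (i - 1)"
    using assms by (simp add: R_def)
  moreover have "i - 1 < length (rev (sorted_list_of_set (doubled p)))"
    using assms by (simp add: D_def)
  ultimately show ?thesis
    by (metis finite_doubled nth_mem set_rev set_sorted_list_of_set)
qed

lemma R_1_eq_Max:
  assumes "D p \<ge> 1"
  shows "R p 1 = Max (doubled p)"
proof -
  have "doubled p \<noteq> {}" using assms by (auto simp: D_def)
  then show ?thesis
    using assms sorted_list_of_set_Max_snoc[OF finite_doubled] by (simp add: R_def)
qed

lemma f_no_doubled:
  assumes "p \<in> G1" "D p = 0"
  shows "f p = p" "R p 1 = 0" "block p 0 = p"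
proof -
  show R0: "R p 1 = 0" using assms by (simp add: R_def)
  show b0: "block p 0 = p" unfolding block_def using R0 G1D(1)[OF assms(1)]
    by (auto intro!: multiset_eqI simp: not_less)
  show "f p = p" unfolding f_def using assms(2) b0 by simp
qed

locale G1_peel =
  fixes p :: "nat multiset"
  assumes G1: "p \<in> G1" and D_pos: "D p \<ge> 1"
begin

abbreviation "t \<equiv> R p 1"
abbreviation "q \<equiv> parts_below t p"

lemma count_t: "count p t = 2"
  using R_in_doubled[of 1 p] D_pos by (simp add: doubled_eq)

lemma t_ge_2: "t \<ge> 2"
  using count_t G1D(1,2)[OF G1] by (metis One_nat_def less_2_cases not_le zero_neq_numeral)

lemma count_t_minus_1: "count p (t - 1) = 0"
  using G1D(4)[OF G1, of "t - 1"] t_ge_2 count_t by simp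

lemma count_t_plus_1: "count p (t + 1) = 0"
  using G1D(4)[OF G1, of t] t_ge_2 count_t by simp

lemma doubled_le_t: "x \<in> doubled p \<Longrightarrow> x \<le> t"
  using R_1_eq_Max[OF D_pos] finite_doubled by simp

lemma doubled_q: "doubled q = doubled p - {t}"
  using doubled_le_t by (auto simp: doubled_eq split: if_splits intro: le_neq_implies_less)

lemma q_G1: "q \<in> G1"
  using G1 G1D(3)[OF G1] unfolding G1_def is_partition_def by auto

lemma D_q: "D q = D p - 1"
  unfolding D_def doubled_q using R_in_doubled[of 1 p] D_pos finite_doubled by simp

lemma R_q:
  assumes "i \<ge> 1"
  shows "R q i = R p (Suc i)"
proof (cases "i \<le> D q")
  case True
  have "doubled p \<noteq> {}" using D_pos by (auto simp: D_def)
  then have "rev (sorted_list_of_set (doubled p)) = t # rev (sorted_list_of_set (doubled q))"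
    using sorted_list_of_set_Max_snoc[OF finite_doubled] R_1_eq_Max[OF D_pos] doubled_q by simp
  moreover have "R q i = rev (sorted_list_of_set (doubled q)) ! (i - 1)"
    using True assms by (simp add: R_def)
  moreover have "Suc i \<le> D p" using True D_q D_pos by linarith
  then have "R p (Suc i) = rev (sorted_list_of_set (doubled p)) ! i"
    unfolding R_def by simp
  ultimately show ?thesis using assms by (simp add: nth_Cons')
next
  case False
  then have "\<not> Suc i \<le> D p" using D_q D_pos by linarith
  then show ?thesis using False by (simp add: R_def)
qed

lemma block_q: "block q i = block p (Suc i)"
proof (cases "i = 0")
  case True
  then show ?thesis using R_q[of 1] by (auto simp: block_def filter_filter_mset intro!: filter_mset_cong)
next
  case False
  have "x < t" if "x < R p (Suc i)" for x
  proof (cases "Suc i \<le> D p")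
    case True
    then show ?thesis using that R_in_doubled[of "Suc i" p] doubled_le_t by force
  qed (use that in \<open>simp add: R_def\<close>)
  then show ?thesis using False R_q[of i] R_q[of "Suc i"]
    by (auto simp: block_def filter_filter_mset intro!: filter_mset_cong)
qed

lemma p_decompose: "p = parts_above t p + replicate_mset 2 t + q"
  by (rule multiset_eqI) (use count_t in \<open>auto simp: numeral_2_eq_2\<close>)

end

lemma G1_induct[consumes 1, case_names no_doubled peel]:
  assumes "p \<in> G1"
    and no_doubled: "\<And>p. p \<in> G1 \<Longrightarrow> D p = 0 \<Longrightarrow> P p"
    and peel: "\<And>p. G1_peel p \<Longrightarrow> P (parts_below (R p 1) p) \<Longrightarrow> P p"
  shows "P p"
  using assms(1)
proof (induction "D p" arbitrary: p)
  case 0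
  then show ?case using no_doubled by simp
next
  case (Suc n)
  then have peel_p: "G1_peel p" by unfold_locales auto
  then interpret G1_peel p .
  have "P q" using Suc.hyps(1)[of q] Suc.hyps(2) D_q q_G1 by simp
  then show ?case by (rule peel[OF peel_p])
qed

lemma (in G1_peel) f_peel_block: "f p = stack (parts_above t p) (t - R q 1 - size (block q 0)) (f q)"
proof -
  define n where "n = D q"
  have Dp: "D p = Suc n" using D_q D_pos n_def by simp
  define Ap where "Ap = (\<lambda>i. replicate_mset (R p i - R p (i+1) - size (block p i)) (2*i))"
  define Aq where "Aq = (\<lambda>i. replicate_mset (R q i - R q (i+1) - size (block q i)) (2*i))"
  define Bp where "Bp = (\<lambda>i. image_mset (\<lambda>x. x + 2*i) (block p i))"
  define Bq where "Bq = (\<lambda>i. image_mset (\<lambda>x. x + 2*i) (block q i))"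
  have fp: "f p = sum Ap {1..Suc n} + sum Bp {0..Suc n}" unfolding f_def Ap_def Bp_def Dp ..
  have fq: "f q = sum Aq {1..n} + sum Bq {0..n}" unfolding f_def Aq_def Bq_def n_def ..
  have "sum Ap {1..Suc n} = Ap 1 + sum Ap {Suc 1..Suc n}" by (rule sum.atLeast_Suc_atMost) simp
  also have "sum Ap {Suc 1..Suc n} = sum (\<lambda>i. Ap (Suc i)) {1..n}" by (rule sum.shift_bounds_cl_Suc_ivl)
  also have "\<dots> = sum (\<lambda>i. image_mset (\<lambda>x. x + 2) (Aq i)) {1..n}"
  proof (rule sum.cong)
    fix i assume "i \<in> {1..n}"
    then show "Ap (Suc i) = image_mset (\<lambda>x. x + 2) (Aq i)"
      unfolding Ap_def Aq_def using R_q[of i] R_q[of "Suc i"] block_q[of i] by simp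
  qed simp
  also have "Ap 1 = replicate_mset (t - R q 1 - size (block q 0)) 2"
    unfolding Ap_def using R_q[of 1] block_q[of 0] by (simp add: numeral_2_eq_2)
  finally have A: "sum Ap {1..Suc n} = replicate_mset (t - R q 1 - size (block q 0)) 2
      + image_mset (\<lambda>x. x + 2) (sum Aq {1..n})" by (simp add: image_mset_sum)
  have "sum Bp {0..Suc n} = Bp 0 + sum Bp {Suc 0..Suc n}" by (rule sum.atLeast_Suc_atMost) simp
  also have "sum Bp {Suc 0..Suc n} = sum (\<lambda>i. Bp (Suc i)) {0..n}" by (rule sum.shift_bounds_cl_Suc_ivl)
  also have "\<dots> = sum (\<lambda>i. image_mset (\<lambda>x. x + 2) (Bq i)) {0..n}"
    unfolding Bp_def Bq_def block_q by (simp add: image_mset.compositionality o_def add_ac)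
  also have "Bp 0 = parts_above t p" unfolding Bp_def by (simp add: block_def)
  finally have B: "sum Bp {0..Suc n} = parts_above t p
      + image_mset (\<lambda>x. x + 2) (sum Bq {0..n})" by (simp add: image_mset_sum)
  show ?thesis unfolding fp fq A B stack_def by (simp add: image_mset_union add_ac)
qed

context G1_peel
begin

lemma part_of_q_le: "x \<in># q \<Longrightarrow> x + 2 \<le> t"
  using count_t_minus_1 by (cases "x = t - 1") (auto simp: not_in_iff[symmetric])

lemma size_block_q_0: "R q 1 + size (block q 0) + 2 \<le> t"
proof -
  define r where "r = R q 1"
  have r_doubled: "count q r = 2" if "r > 0"
    using that R_in_doubled[of 1 q] unfolding r_def by (cases "1 \<le> D q") (auto simp: doubled_eq R_def)
  have r_le: "r + 2 \<le> t"
  proof (cases "r > 0")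
    case True
    then have "r \<in># q" using r_doubled mem_if_count_ge_2[of q r] by simp
    then show ?thesis by (rule part_of_q_le)
  qed (use t_ge_2 in simp)
  have block: "block q 0 = filter_mset (\<lambda>x. r < x) q" unfolding block_def r_def by simp
  have "set_mset (block q 0) \<subseteq> {r+2..t-2}"
  proof
    fix x assume "x \<in># block q 0"
    then have x: "x \<in># q" "r < x" using block by auto
    have "x \<noteq> r + 1"
    proof
      assume "x = r + 1"
      then show False
        using x r_doubled G1D(2)[OF q_G1] G1D(4)[OF q_G1, of r] by (cases "r > 0") (auto simp: not_in_iff[symmetric])
    qed
    then show "x \<in> {r+2..t-2}" using x part_of_q_le[of x] by auto
  qed
  moreover have "count (block q 0) x \<le> 1" for x
  proof (cases "x \<in># block q 0")
    case True
    then have x: "x \<in># q" "r < x" using block by auto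
    have "x \<notin> doubled q"
    proof
      assume "x \<in> doubled q"
      then have "D q \<ge> 1" unfolding D_def using finite_doubled card_0_eq by fastforce
      then have "x \<le> r" unfolding r_def R_1_eq_Max[OF \<open>D q \<ge> 1\<close>]
        using \<open>x \<in> doubled q\<close> finite_doubled by simp
      then show False using x by simp
    qed
    then show ?thesis using x block G1D(3)[OF q_G1, of x] by (simp add: doubled_eq)
  qed (simp add: not_in_iff)
  ultimately have "size (block q 0) \<le> card {r+2..t-2}" by (intro size_mset_le_card_if_simple) auto
  then show ?thesis using r_le unfolding r_def by simp
qed

end

lemma size_f: "p \<in> G1 \<Longrightarrow> size (f p) = R p 1 + size (block p 0)"
proof (induction p rule: G1_induct)
  case (no_doubled p)
  then show ?case using f_no_doubled by simp
next
  case (peel p)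
  interpret G1_peel p by fact
  show ?case using f_peel_block peel.IH size_block_q_0 by (simp add: size_stack block_def)
qed

context G1_peel
begin

lemma size_f_q: "size (f q) + 2 \<le> t"
  using size_f[OF q_G1] size_block_q_0 by simp

lemma f_peel: "f p = stack (parts_above t p) (t - size (f q)) (f q)"
  using f_peel_block size_f[OF q_G1] by (simp add: diff_diff_add)

end

lemma f_parts_le: "p \<in> G1 \<Longrightarrow> y \<in># f p \<Longrightarrow> \<exists>x\<in>#p. y \<le> x"
proof (induction p arbitrary: y rule: G1_induct)
  case (no_doubled p)
  then show ?case using f_no_doubled by auto
next
  case (peel p)
  interpret G1_peel p by fact
  have "t \<in># p" using count_t mem_if_count_ge_2[of p t] by simp
  moreover have "y \<in># parts_above t p \<or> y = 2 \<or> (\<exists>z\<in>#f q. y = z + 2)"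
    using peel.prems by (auto simp: f_peel stack_def split: if_splits)
  moreover have "z + 2 \<le> t" if "z \<in># f q" for z
    using peel.IH[OF that] part_of_q_le by force
  ultimately show ?case using t_ge_2 by auto
qed

lemma (in G1_peel) separated_f_q: "separated_at t (parts_above t p) (f q)"
  unfolding separated_at_def
proof (intro conjI ballI allI)
  show "y + 2 \<le> t" if "y \<in># f q" for y
    using f_parts_le[OF q_G1 that] part_of_q_le by force
  show "t + 2 \<le> x" if "x \<in># parts_above t p" for x
    using that count_t_plus_1 by (cases "x = t + 1") (auto simp: not_in_iff[symmetric])
  show "count (parts_above t p) x \<le> 1" for x
  proof (cases "t < x")
    case True
    then have "count p x \<noteq> 2" using doubled_le_t[of x] by (auto simp: doubled_eq)
    then show ?thesis using True G1D(3)[OF G1, of x] by simp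
  qed simp
qed

lemma finite_repeated_parts: "finite {j. count l j \<ge> 2}"
  by (rule finite_subset[of _ "set_mset l"]) (auto intro: mem_if_count_ge_2)

lemma le_R1: "count l j \<ge> 2 \<Longrightarrow> j \<le> R1 l"
  unfolding R1_def using finite_repeated_parts[of l] by (auto intro: Max_ge)

lemma count_R1: "R1 l > 0 \<Longrightarrow> count l (R1 l) \<ge> 2"
  unfolding R1_def using Max_in[OF finite_repeated_parts[of l]] by (auto split: if_splits)

lemma R1_eqI: "count l r \<ge> 2 \<Longrightarrow> (\<And>j. count l j \<ge> 2 \<Longrightarrow> j \<le> r) \<Longrightarrow> R1 l = r"
  unfolding R1_def using finite_repeated_parts[of l] by (auto intro!: Max_eqI)

lemma R1_eq_0:
  assumes "\<And>j. count l j \<le> 1"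
  shows "R1 l = 0"
proof -
  have "\<not> 2 \<le> count l j" for j using assms[of j] by linarith
  then show ?thesis unfolding R1_def by simp
qed

lemma A1D:
  assumes "l \<in> A1"
  shows "count l 0 = 0" "count l 1 = 0" "odd j \<Longrightarrow> count l j \<le> 1"
    "odd j \<Longrightarrow> j < R1 l + 2 \<Longrightarrow> count l j = 0"
    "even j \<Longrightarrow> 0 < j \<Longrightarrow> j < R1 l \<Longrightarrow> count l j \<ge> 2"
  using assms unfolding A1_def is_partition_def by (auto simp: not_in_iff)

lemma stack_in_A1:
  assumes \<mu>: "\<mu> \<in> A1" and m: "2 \<le> m" and t: "2 \<le> t" and sep: "separated_at t B \<mu>"
  shows "stack B m \<mu> \<in> A1" "R1 (stack B m \<mu>) = R1 \<mu> + 2"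
proof -
  define l where "l = stack B m \<mu>"
  note cl = count_stack[of B m \<mu>, folded l_def]
  note sep = separated_atD[OF sep]
  have R1_le: "R1 \<mu> + 2 \<le> t"
    using count_R1[of \<mu>] sep(2)[of "R1 \<mu>"] t by (cases "R1 \<mu> = 0") fastforce+
  have big: "t < j \<Longrightarrow> count l j \<le> 1" for j
    using cl[of j] sep(2)[of "j - 2"] sep(3)[of j] t by (auto split: if_splits)
  have small: "j \<le> t \<Longrightarrow> count l j = (if j = 2 then m else 0) + (if 2 \<le> j then count \<mu> (j - 2) else 0)" for j
    using cl[of j] sep(1)[of j] by simp
  have R1l: "R1 l = R1 \<mu> + 2"
  proof (rule R1_eqI)
    show "count l (R1 \<mu> + 2) \<ge> 2"
      using small[of "R1 \<mu> + 2"] count_R1[of \<mu>] R1_le m by (cases "R1 \<mu> = 0") auto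
  next
    fix j assume j: "count l j \<ge> 2"
    then have "j \<le> t" using big[of j] by linarith
    then show "j \<le> R1 \<mu> + 2"
      using small[of j] j le_R1[of \<mu> "j - 2"] by (cases "j \<le> 2") auto
  qed
  have "l \<in> A1"
    unfolding A1_def is_partition_def
  proof (intro CollectI conjI allI impI)
    show "0 \<notin># l" using small[of 0] t by (simp add: not_in_iff)
  next
    fix j :: nat assume "odd j"
    then have "2 \<le> j \<Longrightarrow> odd (j - 2)" by presburger
    then show "count l j \<le> 1"
      using big[of j] small[of j] A1D(3)[OF \<mu>, of "j - 2"] \<open>odd j\<close>
      by (cases "t < j"; cases "2 \<le> j") auto
  next
    fix j :: nat assume j: "odd j \<and> j < R1 l + 2"
    then have "count B j = 0" using sep(1)[of j] R1l R1_le by simp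
    moreover have "2 \<le> j \<Longrightarrow> odd (j - 2)" using j by presburger
    then have "2 \<le> j \<Longrightarrow> count \<mu> (j - 2) = 0"
      using A1D(4)[OF \<mu>, of "j - 2"] j R1l by auto
    ultimately show "count l j = 0" using cl[of j] j by auto
  next
    fix j :: nat assume j: "even j \<and> 0 < j \<and> j < R1 l"
    show "count l j \<ge> 2"
    proof (cases "j = 2")
      case False
      then have "j \<ge> 4" "even (j - 2)" using j by presburger+
      then show ?thesis using small[of j] A1D(5)[OF \<mu>, of "j - 2"] j R1l R1_le by auto
    qed (use small[of 2] t m in simp)
  qed
  with R1l show "stack B m \<mu> \<in> A1" "R1 (stack B m \<mu>) = R1 \<mu> + 2"
    unfolding l_def by simp_all
qed

lemma f_in_A1: "p \<in> G1 \<Longrightarrow> f p \<in> A1 \<and> R1 (f p) = 2 * D p"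
proof (induction p rule: G1_induct)
  case (no_doubled p)
  then have "count p j \<noteq> 2" for j by (auto simp: D_eq_0_iff doubled_eq)
  then have simple: "count p j \<le> 1" for j
    using le_neq_implies_less[OF G1D(3)[OF no_doubled(1), of j]] by simp
  then have R1: "R1 p = 0" by (rule R1_eq_0)
  have "odd j \<Longrightarrow> j < 2 \<Longrightarrow> j = 1" for j :: nat by presburger
  then have "p \<in> A1"
    using simple G1D(1,2)[OF no_doubled(1)] unfolding A1_def is_partition_def
    by (auto simp: not_in_iff R1)
  then show ?case using no_doubled R1 f_no_doubled by simp
next
  case (peel p)
  interpret G1_peel p by fact
  have "2 \<le> t - size (f q)" using size_f_q by simp
  then show ?case
    using stack_in_A1[OF _ _ t_ge_2 separated_f_q] peel.IH D_q D_pos by (simp add: f_peel)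
qed

lemma sum_mset_f: "p \<in> G1 \<Longrightarrow> sum_mset (f p) = sum_mset p"
proof (induction p rule: G1_induct)
  case (no_doubled p)
  then show ?case using f_no_doubled by simp
next
  case (peel p)
  interpret G1_peel p by fact
  have "sum_mset (f p) = sum_mset (parts_above t p) + 2 * t + sum_mset q"
    using size_f_q peel.IH by (simp add: f_peel sum_mset_stack)
  also have "\<dots> = sum_mset (parts_above t p + replicate_mset 2 t + q)" by simp
  also have "\<dots> = sum_mset p" using p_decompose by (rule arg_cong[symmetric])
  finally show ?case .
qed

lemma f_inj: "p \<in> G1 \<Longrightarrow> p' \<in> G1 \<Longrightarrow> f p = f p' \<Longrightarrow> p = p'"
proof (induction p arbitrary: p' rule: G1_induct)
  case (no_doubled p)
  then have "D p' = 0" using f_in_A1[of p] f_in_A1[of p'] by simp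
  then show ?case using f_no_doubled no_doubled by metis
next
  case (peel p)
  interpret G1_peel p by fact
  have "D p' = D p" using f_in_A1[of p] f_in_A1[of p'] G1 peel.prems by simp
  then interpret p': G1_peel p' using peel.prems D_pos by unfold_locales auto
  have zero: "0 \<notin># f q" "0 \<notin># f p'.q"
    using f_in_A1[OF q_G1] f_in_A1[OF p'.q_G1] by (auto simp: A1_def is_partition_def)
  have m: "(t - size (f q)) + size (f q) = t" "(p'.t - size (f p'.q)) + size (f p'.q) = p'.t"
    using size_f_q p'.size_f_q by simp_all
  have "stack (parts_above t p) (t - size (f q)) (f q)
      = stack (parts_above p'.t p') (p'.t - size (f p'.q)) (f p'.q)"
    using peel.prems(2) unfolding f_peel p'.f_peel .
  note eqs = stack_inj[OF separated_f_q t_ge_2 m(1) zero(1) p'.separated_f_q p'.t_ge_2 m(2) zero(2) this]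
  moreover have "q = p'.q" using peel.IH p'.q_G1 eqs(3) by simp
  ultimately show ?case using p_decompose p'.p_decompose eqs(1,2) by metis
qed

lemma part_in_f_or_le_size_f:
  assumes "p \<in> G1" "x \<in># p"
  shows "x \<in># f p \<or> x \<le> size (f p)"
proof (cases "D p = 0")
  case True
  then show ?thesis using f_no_doubled assms by simp
next
  case False
  then interpret G1_peel p using assms(1) by unfold_locales auto
  have "t < x \<Longrightarrow> x \<in># f p" using assms(2) by (simp add: f_peel stack_def)
  then show ?thesis using size_f[OF G1] by linarith
qed

lemma add_pair_G1:
  assumes q: "q \<in> G1" and sep: "separated_at t B q" and t: "2 \<le> t"
  defines "p \<equiv> B + replicate_mset 2 t + q"
  shows "p \<in> G1" "G1_peel p" "R p 1 = t" "parts_below t p = q" "parts_above t p = B"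
proof -
  note sep = separated_atD[OF sep]
  have count_p: "count p j = count B j + (if j = t then 2 else 0) + count q j" for j
    unfolding p_def by simp
  have "count p j + count p (j+1) \<le> 2" if "j \<ge> 1" for j
  proof -
    consider "j + 1 < t" | "j + 1 = t" | "j = t" | "t < j" by linarith
    then show ?thesis
      using count_p[of j] count_p[of "j+1"] sep(1)[of j] sep(1)[of "j+1"] sep(2)[of j] sep(2)[of "j+1"]
        sep(3)[of j] sep(3)[of "j+1"] G1D(4)[OF q that]
      by cases auto
  qed
  then show "p \<in> G1" unfolding G1_def is_partition_def
    using count_p[of 0] count_p[of 1] sep(1)[of 0] sep(1)[of 1] G1D(1,2)[OF q] t by (auto simp: not_in_iff)
  have "count p j = 2 \<longleftrightarrow> j = t \<or> count q j = 2" for j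
    using count_p[of j] sep(1)[of j] sep(2)[of j] sep(3)[of j] by (cases "j < t + 2") auto
  then have doubled_p: "doubled p = insert t (doubled q)" by (auto simp: doubled_eq)
  have "t \<notin> doubled q" using sep(2)[of t] by (simp add: doubled_eq)
  then have "D p = D q + 1" unfolding D_def doubled_p using finite_doubled by simp
  then show "G1_peel p" using \<open>p \<in> G1\<close> unfolding G1_peel_def by simp
  have "y \<le> t" if "y \<in> doubled q" for y
    using that sep(2)[of y] by (cases "t < y + 2") (auto simp: doubled_eq)
  then have "Max (doubled p) = t" unfolding doubled_p using finite_doubled by (intro Max_eqI) auto
  then show "R p 1 = t" using R_1_eq_Max \<open>D p = D q + 1\<close> by simp
  show "parts_below t p = q" "parts_above t p = B"
    by (rule multiset_eqI; use count_p sep(1,2) in auto)+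
qed

lemma f_add_pair:
  assumes "q \<in> G1" "separated_at t B q" "2 \<le> t"
  shows "f (B + replicate_mset 2 t + q) = stack B (t - size (f q)) (f q)"
proof -
  note add = add_pair_G1[OF assms]
  interpret G1_peel "B + replicate_mset 2 t + q" by (fact add(2))
  show ?thesis using f_peel add(3-5) by simp
qed

lemma A1_R1_eq_0:
  assumes l: "l \<in> A1" and R1: "R1 l = 0"
  shows "l \<in> G1" "f l = l"
proof -
  have simple: "count l j \<le> 1" for j
    using le_R1[of l j] R1 A1D(1)[OF l] by (cases "j = 0") fastforce+
  then have "count l j + count l (j + 1) \<le> 2" for j
    using add_le_mono[of "count l j" 1 "count l (j + 1)" 1] by simp
  then show "l \<in> G1"
    using l A1D(2)[OF l] unfolding G1_def A1_def by simp
  have "count l j \<noteq> 2" for j using simple[of j] by simp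
  then have "D l = 0" by (simp add: D_eq_0_iff doubled_eq)
  with \<open>l \<in> G1\<close> show "f l = l" by (rule f_no_doubled)
qed

lemma A1_size_parts_le_R1:
  assumes l: "l \<in> A1"
  shows "R1 l \<le> size (filter_mset (\<lambda>x. x \<le> R1 l) l)"
proof -
  have "2 * k \<le> size (filter_mset (\<lambda>x. x \<le> 2 * k) l)" if "2 * k \<le> R1 l" for k
    using that
  proof (induction k)
    case (Suc k)
    have "count l (2 * k + 2) \<ge> 2"
      using A1D(5)[OF l, of "2 * k + 2"] count_R1[of l] Suc.prems
      by (cases "2 * k + 2 = R1 l") auto
    then show ?case
      using Suc size_filter_le_Suc[of "2 * k" l] size_filter_le_Suc[of "Suc (2 * k)" l] by simp
  qed simp
  moreover have "even (R1 l)"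
    using A1D(3)[OF l, of "R1 l"] count_R1[of l] by (cases "R1 l = 0") auto
  ultimately show ?thesis by (metis dvd_mult_div_cancel order_refl)
qed

lemma A1_threshold:
  assumes l: "l \<in> A1"
  obtains t where "R1 l \<le> t" "size (filter_mset (\<lambda>x. x \<le> t) l) = t" "count l (Suc t) = 0"
proof -
  let ?n = "\<lambda>s. size (filter_mset (\<lambda>x. x \<le> s) l)"
  define S where "S = {s. R1 l \<le> s \<and> s \<le> ?n s}"
  have "finite S"
    by (rule finite_subset[of _ "{..size l}"]) (auto simp: S_def intro: le_trans size_filter_mset_lesseq)
  moreover have "R1 l \<in> S" using A1_size_parts_le_R1[OF l] by (simp add: S_def)
  ultimately have "Max S \<in> S" "Suc (Max S) \<notin> S" by (auto intro: Max_in dest: Max_ge)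
  then show ?thesis
    using that[of "Max S"] size_filter_le_Suc[of "Max S" l] by (auto simp: S_def)
qed

definition lower_parts :: "nat \<Rightarrow> nat multiset \<Rightarrow> nat multiset" where
  "lower_parts t l = image_mset (\<lambda>x. x - 2) (filter_mset (\<lambda>x. 2 < x \<and> x \<le> t) l)"

lemma count_lower_parts:
  "count (lower_parts t l) j = (if 0 < j \<and> j + 2 \<le> t then count l (j + 2) else 0)"
proof -
  define M where "M = filter_mset (\<lambda>x. 2 < x \<and> x \<le> t) l"
  have "image_mset (\<lambda>x. x + 2) (lower_parts t l) = image_mset (\<lambda>x. x - 2 + 2) M"
    unfolding lower_parts_def M_def by (simp add: image_mset.compositionality o_def)
  also have "\<dots> = M" by (rule image_mset_cong[where g = id, simplified]) (auto simp: M_def)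
  finally have "count (lower_parts t l) j = count M (j + 2)"
    using count_image_mset_add[of 2 "lower_parts t l" "j + 2"] by simp
  then show ?thesis by (simp add: M_def)
qed

lemma stack_lower_parts:
  assumes "count l 0 = 0" "count l 1 = 0" "2 \<le> t"
  shows "l = stack (parts_above t l) (count l 2) (lower_parts t l)"
proof (rule multiset_eqI)
  fix j
  show "count l j = count (stack (parts_above t l) (count l 2) (lower_parts t l)) j"
  proof (cases "j \<le> 2")
    case True
    then show ?thesis using assms count_lower_parts[of t l 0]
      by (auto simp: count_stack le_Suc_eq numeral_2_eq_2)
  next
    case False
    define k where "k = j - 2"
    have "j = k + 2" "0 < k" using False by (simp_all add: k_def)
    then show ?thesis by (simp add: count_stack count_lower_parts)
  qed
qed

lemma A1_even_R1: "l \<in> A1 \<Longrightarrow> even (R1 l)"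
  using A1D(3)[of l "R1 l"] count_R1[of l] by (cases "R1 l = 0") auto

lemma lower_parts_in_A1:
  assumes l: "l \<in> A1" and R1: "0 < R1 l" "R1 l \<le> t"
  shows "lower_parts t l \<in> A1"
proof -
  let ?\<mu> = "lower_parts t l"
  have R1_ge_2: "R1 l \<ge> 2" using R1(1) A1_even_R1[OF l] by presburger
  have repeated: "j + 2 \<le> R1 l" "0 < j" if "count ?\<mu> j \<ge> 2" for j
    using that count_lower_parts[of t l j] le_R1[of l "j + 2"] by (auto split: if_splits)
  have "R1 ?\<mu> = R1 l - 2"
  proof (cases "R1 l = 2")
    case True
    then have "count ?\<mu> j \<le> 1" for j using repeated[of j] by fastforce
    then show ?thesis using True by (simp add: R1_eq_0)
  next
    case False
    then have four: "R1 l \<ge> 4" using R1_ge_2 A1_even_R1[OF l] by presburger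
    then have "Suc (Suc (R1 l - 2)) = R1 l" by simp
    then show ?thesis
      using four count_lower_parts[of t l "R1 l - 2"] count_R1[OF R1(1)] R1(2) repeated
      by (intro R1_eqI) (auto simp: le_diff_conv2)
  qed
  then show ?thesis
    unfolding A1_def is_partition_def
    using count_lower_parts[of t l 0] A1D(3-5)[OF l] R1_ge_2 R1(2)
    by (auto simp: not_in_iff count_lower_parts)
qed

lemma A1_unstack:
  assumes l: "l \<in> A1" and R1: "0 < R1 l" "R1 l \<le> t"
    and n: "size (filter_mset (\<lambda>x. x \<le> t) l) = t" and gap: "count l (Suc t) = 0"
  shows "separated_at t (parts_above t l) (lower_parts t l)"
    and "count l 2 + size (lower_parts t l) = t" "2 \<le> count l 2"
proof -
  have R1_ge_2: "R1 l \<ge> 2" using R1(1) A1_even_R1[OF l] by presburger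
  show m: "2 \<le> count l 2"
    using A1D(5)[OF l, of 2] count_R1[OF R1(1)] R1_ge_2 by (cases "R1 l = 2") auto
  show sep: "separated_at t (parts_above t l) (lower_parts t l)"
    unfolding separated_at_def
  proof (intro conjI ballI allI)
    show "y + 2 \<le> t" if "y \<in># lower_parts t l" for y
      using that count_lower_parts[of t l y] by (auto simp flip: count_greater_zero_iff split: if_splits)
    show "t + 2 \<le> x" if "x \<in># parts_above t l" for x
      using that gap by (cases "x = Suc t") (auto simp: not_in_iff[symmetric])
    show "count (parts_above t l) x \<le> 1" for x
    proof (cases "t < x")
      case True
      then have "\<not> 2 \<le> count l x" using le_R1[of l x] R1(2) by auto
      with True show ?thesis by simp
    qed simp
  qed
  have "t = size (filter_mset (\<lambda>x. x \<le> t) (stack (parts_above t l) (count l 2) (lower_parts t l)))"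
    using n stack_lower_parts[OF A1D(1,2)[OF l]] R1(2) R1_ge_2 by simp
  also have "\<dots> = count l 2 + size (lower_parts t l)"
    using R1(2) R1_ge_2 by (subst filter_le_stack[OF sep _ order_refl]) (simp_all add: size_stack)
  finally show "count l 2 + size (lower_parts t l) = t" ..
qed

lemma A1_subset_f_image: "l \<in> A1 \<Longrightarrow> l \<in> f ` G1"
proof (induction "size l" arbitrary: l rule: less_induct)
  case less
  show ?case
  proof (cases "R1 l = 0")
    case True
    then show ?thesis using A1_R1_eq_0[OF less.prems] by (metis image_eqI)
  next
    case False
    obtain t where t: "R1 l \<le> t" "size (filter_mset (\<lambda>x. x \<le> t) l) = t" "count l (Suc t) = 0"
      using A1_threshold[OF less.prems] .
    define \<mu> where "\<mu> = lower_parts t l"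
    have t2: "2 \<le> t" using t(1) False A1_even_R1[OF less.prems] by presburger
    have l: "l = stack (parts_above t l) (count l 2) \<mu>"
      unfolding \<mu>_def using stack_lower_parts A1D(1,2)[OF less.prems] t2 by blast
    have \<mu>: "\<mu> \<in> A1" "separated_at t (parts_above t l) \<mu>" "2 \<le> count l 2"
      and size: "count l 2 + size \<mu> = t"
      unfolding \<mu>_def using lower_parts_in_A1 A1_unstack less.prems t False by auto
    have "size \<mu> < size l"
      using \<mu>(3) mem_if_count_ge_2[OF \<mu>(3)] by (subst l) (simp add: size_stack)
    then obtain q where q: "q \<in> G1" "f q = \<mu>" using less.hyps \<mu>(1) by blast
    have "x + 2 \<le> t" if "x \<in># q" for x
      using part_in_f_or_le_size_f[OF q(1) that] \<mu>(2,3) q(2) size by (auto simp: separated_at_def)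
    then have sep: "separated_at t (parts_above t l) q"
      using \<mu>(2) by (simp add: separated_at_def)
    have "f (parts_above t l + replicate_mset 2 t + q) = stack (parts_above t l) (count l 2) \<mu>"
      using f_add_pair[OF q(1) sep t2] q(2) size[symmetric] by simp
    also have "\<dots> = l" by (rule l[symmetric])
    finally show ?thesis using add_pair_G1(1)[OF q(1) sep t2] by (metis image_eqI)
  qed
qed

theorem theorem3:
  shows "bij_betw f G1 A1 \<and> (\<forall>p\<in>G1. sum_mset (f p) = sum_mset p)"
  unfolding bij_betw_def
  using f_inj f_in_A1 A1_subset_f_image sum_mset_f by (auto intro!: inj_onI)

end
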